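(* Let $K$ be a field of characteristic $0$, let $E$ be the infinite-dimensional unitary Grassmann algebra over $K$ with even part $E_0$, let $A=\begin{pmatrix} E_0 & E\\ 0 & E\end{pmatrix}$, and let $F_n(A)=K\langle x_1,\dots,x_n\rangle/(K\langle x_1,\dots,x_n\rangle\cap T(A))$. Let $n\geq 2$ be even and $m\geq n+2$. Then the polynomial \[f_{m,n+2}^{(5)}=\sum_{\sigma\in S_{n+2}}(-1)^{\sigma}[x_{\sigma(1)},x_{\sigma(2)},x_1,\dots,x_1][x_{\sigma(3)},x_{\sigma(4)}]\cdots[x_{\sigma(n+1)},x_{\sigma(n+2)}],\] where each first factor is the left-normed commutator of length $m-n$ consisting of $x_{\sigma(1)},x_{\sigma(2)}$ followed by $m-n-2$ copies of $x_1$, is not a polynomial identity of $F_n(A)$.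
   Context: All algebras are associative and unitary over $K$; $T(A)$ is the ideal of polynomial identities of $A$. $E$ is generated by anticommuting $e_1,e_2,\dots$ and $E_0$ is the span of basis products of even length. Commutators: $[a,b]=ab-ba$, $[a_1,\dots,a_k]=[[a_1,\dots,a_{k-1}],a_k]$; $(-1)^\sigma$ is the sign of $\sigma$. The polynomial has total degree $m$. *)

theory Defs
  imports "HOL-Combinatorics.Combinatorics" "HOL-Library.Function_Algebras" "HOL-Library.Product_Plus"
begin

text \<open>An element of E is a function assigning to each finite set S of indices the
coefficient of the basis monomial e_S = e_{s1} e_{s2} ... e_{sk} (s1 < ... < sk).\<close>

type_synonym 'k grass = "nat set \<Rightarrow> 'k"

definition grass_sgn :: "nat set \<Rightarrow> nat set \<Rightarrow> 'k::ring_1" where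
  "grass_sgn S T = (-1) ^ card {(s,t). s \<in> S \<and> t \<in> T \<and> t < s}"

text \<open>Product: e_S e_T = 0 if S, T intersect, else grass_sgn S T * e_(S union T).\<close>
definition gmul :: "'k::ring_1 grass \<Rightarrow> 'k grass \<Rightarrow> 'k grass" where
  "gmul x y U = (if finite U then (\<Sum>S\<in>Pow U. grass_sgn S (U - S) * x S * y (U - S)) else 0)"

definition gone :: "'k::ring_1 grass" where
  "gone U = (if U = {} then 1 else 0)"

definition grassmann :: "'k::field grass set" where
  "grassmann = {x. finite {S. x S \<noteq> 0} \<and> (\<forall>S. x S \<noteq> 0 \<longrightarrow> finite S)}"

definition grassmann_even :: "'k::field grass set" where
  "grassmann_even = {x \<in> grassmann. \<forall>S. x S \<noteq> 0 \<longrightarrow> even (card S)}"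

text \<open>(a,b,c) represents the upper triangular matrix [[a,b],[0,c]].
Addition, negation and zero are componentwise (Product_Plus, Function_Algebras).\<close>

type_synonym 'k utm = "'k grass \<times> 'k grass \<times> 'k grass"

definition algA :: "'k::field utm set" where
  "algA = {(a,b,c). a \<in> grassmann_even \<and> b \<in> grassmann \<and> c \<in> grassmann}"

fun amul :: "'k::ring_1 utm \<Rightarrow> 'k utm \<Rightarrow> 'k utm" where
  "amul (a,b,c) (a',b',c') = (gmul a a', gmul a b' + gmul b c', gmul c c')"

definition aone :: "'k::ring_1 utm" where
  "aone = (gone, 0, gone)"

fun asmul :: "'k::ring_1 \<Rightarrow> 'k utm \<Rightarrow> 'k utm" where
  "asmul k (a,b,c) = ((\<lambda>U. k * a U), (\<lambda>U. k * b U), (\<lambda>U. k * c U))"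

definition acomm :: "'k::ring_1 utm \<Rightarrow> 'k utm \<Rightarrow> 'k utm" where
  "acomm x y = amul x y - amul y x"

datatype 'k ncpoly = PVar nat | PConst 'k | PAdd "'k ncpoly" "'k ncpoly" | PMul "'k ncpoly" "'k ncpoly"

fun pvars :: "'k ncpoly \<Rightarrow> nat set" where
  "pvars (PVar i) = {i}"
| "pvars (PConst k) = {}"
| "pvars (PAdd p q) = pvars p \<union> pvars q"
| "pvars (PMul p q) = pvars p \<union> pvars q"

fun peval :: "(nat \<Rightarrow> 'k::ring_1 utm) \<Rightarrow> 'k ncpoly \<Rightarrow> 'k utm" where
  "peval a (PVar i) = a i"
| "peval a (PConst k) = asmul k aone"
| "peval a (PAdd p q) = peval a p + peval a q"
| "peval a (PMul p q) = amul (peval a p) (peval a q)"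

definition f5 :: "nat \<Rightarrow> nat \<Rightarrow> (nat \<Rightarrow> 'k::ring_1 utm) \<Rightarrow> 'k utm" where
  "f5 m n y = (\<Sum>\<sigma> | \<sigma> permutes {1..n+2}.
      asmul (of_int (sign \<sigma>))
        (foldl amul
          (foldl acomm (acomm (y (\<sigma> 1)) (y (\<sigma> 2))) (replicate (m - n - 2) (y 1)))
          (map (\<lambda>i. acomm (y (\<sigma> (2*i+1))) (y (\<sigma> (2*i+2)))) [1..<n div 2 + 1])))"

end

theory Submission
  imports Defs
begin

text \<open>
  Substitute \<open>x\<^sub>j \<mapsto> \<delta>\<^sub>j\<^sub>1 E\<^sub>1\<^sub>1 + \<delta>\<^sub>j\<^sub>2 E\<^sub>1\<^sub>2 + e\<^sub>j E\<^sub>2\<^sub>2\<close> for \<open>j \<le> n\<close>, and evaluate the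
  variables \<open>x\<^sub>n\<^sub>+\<^sub>1\<close>, \<open>x\<^sub>n\<^sub>+\<^sub>2\<close> of \<open>f\<close> at the polynomials \<open>x\<^sub>1\<^sup>2 \<mapsto> E\<^sub>1\<^sub>1\<close> and
  \<open>x\<^sub>1 x\<^sub>2 \<mapsto> E\<^sub>1\<^sub>2 + e\<^sub>1 e\<^sub>2 E\<^sub>2\<^sub>2\<close>. All commutators of these values have zero \<open>(1,1)\<close>-entry, so the
  \<open>(1,2)\<close>-entry of a summand of \<open>f\<close> is the \<open>(1,2)\<close>-entry of the long commutator times the
  \<open>(2,2)\<close>-entries of the short ones, and \<open>[e\<^sub>a, e\<^sub>b] = 2 e\<^sub>a e\<^sub>b\<close>. Consider the coefficient of
  \<open>e\<^sub>1 \<cdots> e\<^sub>n\<close>. Since \<open>E\<^sub>1\<^sub>1\<close> has zero \<open>(2,2)\<close>-entry and \<open>e\<^sub>1 e\<^sub>2\<close> is central, it vanishes unless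
  \<open>\<sigma>\<close> puts \<open>n+1\<close> and \<open>n+2\<close> into the long commutator. Then the long commutator contributes
  \<open>\<plusminus>1\<close> (from \<open>[E\<^sub>1\<^sub>1, E\<^sub>1\<^sub>2] = E\<^sub>1\<^sub>2\<close> and \<open>[E\<^sub>1\<^sub>2, E\<^sub>1\<^sub>1] = -E\<^sub>1\<^sub>2\<close>) and the short ones
  \<open>\<plusminus>2\<^bsup>n/2\<^esup>\<close>; counting inversions shows that the product of these signs is exactly
  \<open>sign \<sigma>\<close>. So all surviving summands are equal, and in characteristic 0 their sum is nonzero.
\<close>

section \<open>Grassmann monomials\<close>

definition grass_monom :: "nat set \<Rightarrow> 'k::ring_1 \<Rightarrow> 'k grass" where
  "grass_monom S c = (\<lambda>T. if T = S then c else 0)"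

lemma grass_monom_diff: "grass_monom S c - grass_monom S d = grass_monom S (c - d)"
  by (auto simp: grass_monom_def)

lemma gone_eq_grass_monom: "gone = grass_monom {} 1"
  by (auto simp: gone_def grass_monom_def)

lemma grass_monom_in_grassmann: "finite S \<Longrightarrow> grass_monom S c \<in> grassmann"
  by (auto simp: grassmann_def grass_monom_def intro: finite_subset[of _ "{S}"])

lemma gone_in_grassmann_even: "gone \<in> grassmann_even"
  using grass_monom_in_grassmann[of "{}" 1]
  by (auto simp: grassmann_even_def gone_eq_grass_monom grass_monom_def)

lemma zero_in_grassmann_even: "0 \<in> grassmann_even"
  by (simp add: grassmann_even_def grassmann_def)

lemma gmul_zero_left [simp]: "gmul 0 x = 0"
  and gmul_zero_right [simp]: "gmul x 0 = 0"
  by (auto simp: gmul_def)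

lemma gmul_empty: "gmul x y {} = x {} * y {}"
  by (simp add: gmul_def grass_sgn_def)

lemma gmul_grass_monom_right:
  "gmul x (grass_monom T d) U =
     (if finite U \<and> T \<subseteq> U then grass_sgn (U - T) T * x (U - T) * d else 0)"
proof (cases "finite U \<and> T \<subseteq> U")
  case True
  then have fin: "finite U" and sub: "T \<subseteq> U" by auto
  have "gmul x (grass_monom T d) U = (\<Sum>S\<in>Pow U. grass_sgn S (U - S) * x S * grass_monom T d (U - S))"
    by (simp add: gmul_def fin)
  also have "\<dots> = (\<Sum>S\<in>{U - T}. grass_sgn S (U - S) * x S * grass_monom T d (U - S))"
    using fin sub by (intro sum.mono_neutral_right) (auto simp: grass_monom_def)
  also have "\<dots> = grass_sgn (U - T) T * x (U - T) * d"
    using sub by (simp add: grass_monom_def double_diff)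
  finally show ?thesis using True by simp
qed (auto simp: gmul_def grass_monom_def intro!: sum.neutral)

lemma gmul_grass_monom_monom:
  assumes "finite S" "finite T"
  shows "gmul (grass_monom S c) (grass_monom T d) =
           (if S \<inter> T = {} then grass_monom (S \<union> T) (grass_sgn S T * c * d) else 0)"
proof
  fix U
  show "gmul (grass_monom S c) (grass_monom T d) U =
          (if S \<inter> T = {} then grass_monom (S \<union> T) (grass_sgn S T * c * d) else 0) U"
    unfolding gmul_grass_monom_right using assms by (auto simp: grass_monom_def Diff_triv)
qed

lemma gmul_grass_monom_Un:
  assumes "finite U" "finite T" "U \<inter> T = {}"
  shows "gmul x (grass_monom T d) (U \<union> T) = grass_sgn U T * x U * d"
proof -
  have "(U \<union> T) - T = U" using assms(3) by blast
  with assms(1,2) show ?thesis by (simp add: gmul_grass_monom_right)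
qed

lemma gmul_gone_gone [simp]: "gmul gone gone = gone"
  by (simp add: gone_eq_grass_monom gmul_grass_monom_monom grass_sgn_def)

lemma grass_sgn_singletons: "grass_sgn {a} {b} = (if b < a then -1 else 1)"
proof -
  have "{(s,t). s \<in> {a} \<and> t \<in> {b} \<and> t < s} = (if b < a then {(a,b)} else {})" by auto
  then show ?thesis by (simp add: grass_sgn_def)
qed

lemma foldl_gmul_zero: "foldl gmul 0 ys = 0"
  by (induction ys) (simp_all only: foldl_Nil foldl_Cons gmul_zero_left)

lemma foldl_gmul_zero_mem: "0 \<in> set ys \<Longrightarrow> foldl gmul x ys = 0"
  by (induction ys arbitrary: x) (auto simp only: foldl_Cons set_simps gmul_zero_right foldl_gmul_zero insert_iff)

section \<open>Inversions and the sign of a permutation\<close>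

definition inversions :: "(nat \<Rightarrow> nat) \<Rightarrow> nat set \<Rightarrow> (nat \<times> nat) set" where
  "inversions p S = {(i, j). i \<in> S \<and> j \<in> S \<and> i < j \<and> p j < p i}"

lemma finite_inversions [simp]: "finite S \<Longrightarrow> finite (inversions p S)"
  unfolding inversions_def by (rule finite_subset[of _ "S \<times> S"]) auto

lemma card_pairs_symmetric:
  fixes R :: "nat \<Rightarrow> nat \<Rightarrow> bool"
  assumes "finite S" and irrefl: "\<And>i. \<not> R i i" and sym: "\<And>i j. R i j \<Longrightarrow> R j i"
  shows "card {(i, j). i \<in> S \<and> j \<in> S \<and> R i j} = 2 * card {(i, j). i \<in> S \<and> j \<in> S \<and> i < j \<and> R i j}"
proof -
  let ?L = "{(i, j). i \<in> S \<and> j \<in> S \<and> i < j \<and> R i j}"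
  let ?G = "{(i, j). i \<in> S \<and> j \<in> S \<and> j < i \<and> R i j}"
  have fin: "finite ?L" "finite ?G"
    using assms(1) by (auto intro: finite_subset[of _ "S \<times> S"])
  have "{(i, j). i \<in> S \<and> j \<in> S \<and> R i j} = ?L \<union> ?G"
    using irrefl by (auto, metis linorder_neqE_nat)
  moreover have "?G = prod.swap ` ?L"
    using sym by (auto simp: image_iff)
  ultimately show ?thesis
    using fin by (simp add: card_Un_disjoint disjoint_iff card_image)
qed

lemma card_pairs_reversed_by_transpose:
  fixes S :: "nat set"
  assumes "finite S" "a \<in> S" "b \<in> S" "a < b"
  shows "card {(u, v). u \<in> S \<and> v \<in> S \<and> u < v \<and> transpose a b v < transpose a b u}
           = Suc (2 * card {w \<in> S. a < w \<and> w < b})"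
proof -
  let ?W = "{w \<in> S. a < w \<and> w < b}"
  have "(u, v) \<in> insert (a, b) ({a} \<times> ?W \<union> ?W \<times> {b})"
    if "u \<in> S" "v \<in> S" "u < v" "transpose a b v < transpose a b u" for u v
    using that assms by (cases "u = a"; cases "u = b"; cases "v = a"; cases "v = b") auto
  then have "{(u, v). u \<in> S \<and> v \<in> S \<and> u < v \<and> transpose a b v < transpose a b u}
               = insert (a, b) ({a} \<times> ?W \<union> ?W \<times> {b})"
    using assms by auto
  moreover have "finite ?W" using assms(1) by simp
  moreover have "(a, b) \<notin> {a} \<times> ?W \<union> ?W \<times> {b}" "{a} \<times> ?W \<inter> ?W \<times> {b} = {}"
    by auto
  ultimately show ?thesis
    by (simp add: card_Un_disjoint card_cartesian_product)
qed

lemma card_pairs_permutes: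
  assumes "p permutes S"
  shows "card {(i, j). i \<in> S \<and> j \<in> S \<and> R (p i) (p j)} = card {(u, v). u \<in> S \<and> v \<in> S \<and> R u v}"
proof -
  let ?X = "{(i, j). i \<in> S \<and> j \<in> S \<and> R (p i) (p j)}"
  have "(u, v) \<in> map_prod p p ` ?X" if "u \<in> S" "v \<in> S" "R u v" for u v
  proof -
    have "u \<in> p ` S" "v \<in> p ` S"
      using that permutes_image[OF assms] by auto
    then obtain i j where "i \<in> S" "j \<in> S" "u = p i" "v = p j"
      by blast
    then show ?thesis
      using that by (intro image_eqI[of _ _ "(i, j)"]) auto
  qed
  moreover have "(p i, p j) \<in> {(u, v). u \<in> S \<and> v \<in> S \<and> R u v}" if "(i, j) \<in> ?X" for i j
    using that permutes_in_image[OF assms] by auto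
  ultimately have "{(u, v). u \<in> S \<and> v \<in> S \<and> R u v} = map_prod p p ` ?X"
    by auto
  moreover have "inj_on (map_prod p p) ?X"
    by (rule inj_on_subset[OF map_prod_inj_on[OF permutes_inj_on[OF assms] permutes_inj_on[OF assms]]]) auto
  ultimately show ?thesis
    by (simp add: card_image)
qed

lemma odd_card_inversions_transpose:
  assumes S: "finite S" and p: "p permutes S" and ab: "a \<in> S" "b \<in> S" "a < b"
  shows "odd (card (inversions (transpose a b \<circ> p) S) + card (inversions p S))"
proof -
  let ?t = "transpose a b"
  define flip where "flip u v \<longleftrightarrow> (v < u) \<noteq> (?t v < ?t u)" for u v
  have flip_irrefl: "\<not> flip u u" for u
    by (simp add: flip_def)
  have flip_sym: "flip v u" if "flip u v" for u v
    using that transpose_eq_imp_eq[of a b u v] unfolding flip_def by (cases "u = v") auto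
  let ?F = "{(i, j). i \<in> S \<and> j \<in> S \<and> i < j \<and> flip (p i) (p j)}"
  have "2 * card ?F = card {(i, j). i \<in> S \<and> j \<in> S \<and> flip (p i) (p j)}"
    by (rule card_pairs_symmetric[OF S, symmetric]) (use flip_irrefl flip_sym in auto)
  also have "\<dots> = card {(u, v). u \<in> S \<and> v \<in> S \<and> flip u v}"
    by (rule card_pairs_permutes[OF p])
  also have "\<dots> = 2 * card {(u, v). u \<in> S \<and> v \<in> S \<and> u < v \<and> flip u v}"
    by (rule card_pairs_symmetric[OF S]) (use flip_irrefl flip_sym in auto)
  also have "{(u, v). u \<in> S \<and> v \<in> S \<and> u < v \<and> flip u v}
               = {(u, v). u \<in> S \<and> v \<in> S \<and> u < v \<and> ?t v < ?t u}"
    by (auto simp: flip_def)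
  finally have "card ?F = Suc (2 * card {w \<in> S. a < w \<and> w < b})"
    using card_pairs_reversed_by_transpose[OF S ab] by simp
  then have odd_flips: "odd (card ?F)"
    by simp
  let ?A = "inversions (?t \<circ> p) S" and ?B = "inversions p S"
  have "?F = (?A \<union> ?B) - (?A \<inter> ?B)"
    unfolding inversions_def flip_def by auto
  moreover have "card ((?A \<union> ?B) - (?A \<inter> ?B)) = card (?A \<union> ?B) - card (?A \<inter> ?B)"
    using S by (intro card_Diff_subset) auto
  moreover have "card ?A + card ?B = card (?A \<union> ?B) + card (?A \<inter> ?B)"
    using S by (intro card_Un_Int) auto
  moreover have "card (?A \<inter> ?B) \<le> card (?A \<union> ?B)"
    using S by (intro card_mono) auto
  ultimately show ?thesis
    using odd_flips by simp
qed

lemma sign_eq_card_inversions: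
  assumes "p permutes S" "finite S"
  shows "sign p = (-1) ^ card (inversions p S)"
  using assms
proof (induction p rule: permutes_induct)
  case id
  have "inversions id S = {}" by (auto simp: inversions_def)
  then show ?case by (simp add: id_def)
next
  case (swap a b p)
  have "sign (transpose a b \<circ> p) = sign (transpose a b) * sign p"
    by (rule sign_compose[OF permutation_swap_id permutes_imp_permutation[OF assms(2) swap(4)]])
  then have sign_swap: "sign (transpose a b \<circ> p) = - sign p"
    using swap(3) by (simp add: sign_swap_id)
  have "odd (card (inversions (transpose a b \<circ> p) S) + card (inversions p S))"
  proof (cases "a < b")
    case True
    then show ?thesis using odd_card_inversions_transpose[OF assms(2) swap(4,1,2)] by simp
  next
    case False
    then have "b < a" using swap(3) by simp
    then show ?thesis
      using odd_card_inversions_transpose[OF assms(2) swap(4,2,1)] by (simp add: transpose_commute)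
  qed
  then show ?case
    using sign_swap swap(5) by (cases "even (card (inversions p S))") (auto simp: comp_def)
qed

lemma card_inversions_Un:
  assumes "finite S0" "finite S1" and less: "\<And>i j. i \<in> S0 \<Longrightarrow> j \<in> S1 \<Longrightarrow> i < j"
  shows "card (inversions p (S0 \<union> S1)) = card (inversions p S0) + card (inversions p S1)
           + card {(i, j). i \<in> S0 \<and> j \<in> S1 \<and> p j < p i}"
proof -
  let ?X = "{(i, j). i \<in> S0 \<and> j \<in> S1 \<and> p j < p i}"
  have "inversions p (S0 \<union> S1) = inversions p S0 \<union> inversions p S1 \<union> ?X"
    using less by (auto simp: inversions_def dest: less_asym)
  moreover have "finite ?X"
    using assms(1,2) by (auto intro: finite_subset[of _ "S0 \<times> S1"])
  moreover have "inversions p S0 \<inter> inversions p S1 = {}" "(inversions p S0 \<union> inversions p S1) \<inter> ?X = {}"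
    using less by (fastforce simp: inversions_def)+
  ultimately show ?thesis
    using assms(1,2) by (simp add: card_Un_disjoint)
qed

lemma card_inversions_pair:
  assumes "a < b"
  shows "card (inversions p {a, b}) = (if p b < p a then 1 else 0)"
proof -
  have "inversions p {a, b} = (if p b < p a then {(a, b)} else {})"
    using assms by (auto simp: inversions_def)
  then show ?thesis by simp
qed

lemma grass_sgn_image:
  assumes "inj_on p (S0 \<union> S1)"
  shows "grass_sgn (p ` S0) (p ` S1) = (-1) ^ card {(i, j). i \<in> S0 \<and> j \<in> S1 \<and> p j < p i}"
proof -
  let ?X = "{(i, j). i \<in> S0 \<and> j \<in> S1 \<and> p j < p i}"
  have "{(s, t). s \<in> p ` S0 \<and> t \<in> p ` S1 \<and> t < s} = map_prod p p ` ?X"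
    by auto
  moreover have "inj_on (map_prod p p) ?X"
    using assms by (auto intro!: inj_on_subset[OF map_prod_inj_on] intro: inj_on_subset)
  ultimately show ?thesis
    by (simp add: grass_sgn_def card_image)
qed

lemma grass_sgn_append_pair:
  assumes "finite I" "inj_on p (I \<union> {a, b})" "\<And>i. i \<in> I \<Longrightarrow> i < a" "a < b"
  shows "(-1) ^ card (inversions p I) * (grass_sgn (p ` I) {p a, p b} * grass_sgn {p a} {p b})
           = ((-1) ^ card (inversions p (I \<union> {a, b})) :: 'k::comm_ring_1)"
proof -
  have "card (inversions p (I \<union> {a, b})) = card (inversions p I) + card (inversions p {a, b})
          + card {(i, j). i \<in> I \<and> j \<in> {a, b} \<and> p j < p i}"
    using assms(1,3,4) by (intro card_inversions_Un) (auto intro: less_trans)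
  moreover have "grass_sgn (p ` I) {p a, p b} = ((-1) ^ card {(i, j). i \<in> I \<and> j \<in> {a, b} \<and> p j < p i} :: 'k)"
    using grass_sgn_image[OF assms(2)] by simp
  moreover have "grass_sgn {p a} {p b} = ((-1) ^ card (inversions p {a, b}) :: 'k)"
    using assms(4) by (simp add: grass_sgn_singletons card_inversions_pair)
  ultimately show ?thesis
    by (simp add: power_add ac_simps)
qed

lemma foldl_gmul_pair_monoms:
  fixes p :: "nat \<Rightarrow> nat" and x :: "'k::comm_ring_1 grass"
  assumes "inj_on p {3..<2 * r + 3}"
  shows "foldl gmul x
           (map (\<lambda>i. grass_monom {p (2*i+1), p (2*i+2)} (2 * grass_sgn {p (2*i+1)} {p (2*i+2)})) [1..<r+1])
           (p ` {3..<2 * r + 3})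
         = x {} * 2 ^ r * (-1) ^ card (inversions p {3..<2 * r + 3})"
  using assms
proof (induction r)
  case 0
  then show ?case by (simp add: inversions_def)
next
  case (Suc r)
  define I where "I = {3..<2 * r + 3}"
  define a where "a = 2 * r + 3"
  define b where "b = 2 * r + 4"
  define Q where "Q = foldl gmul x
    (map (\<lambda>i. grass_monom {p (2*i+1), p (2*i+2)} (2 * grass_sgn {p (2*i+1)} {p (2*i+2)})) [1..<r+1])"
  have I_Suc: "{3..<2 * Suc r + 3} = I \<union> {a, b}"
    by (auto simp: I_def a_def b_def)
  have inj: "inj_on p (I \<union> {a, b})"
    using Suc.prems I_Suc by simp
  then have disj: "p ` I \<inter> {p a, p b} = {}"
    by (auto simp: I_def a_def b_def dest: inj_onD)
  have "[1..<Suc r + 1] = [1..<r + 1] @ [Suc r]" "2 * Suc r + 1 = a" "2 * Suc r + 2 = b"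
    by (simp_all add: a_def b_def)
  then have "foldl gmul x
      (map (\<lambda>i. grass_monom {p (2*i+1), p (2*i+2)} (2 * grass_sgn {p (2*i+1)} {p (2*i+2)})) [1..<Suc r+1])
        = gmul Q (grass_monom {p a, p b} (2 * grass_sgn {p a} {p b}))"
    by (simp only: Q_def map_append foldl_append list.map foldl_Cons foldl_Nil)
  moreover have "gmul Q (grass_monom {p a, p b} (2 * grass_sgn {p a} {p b})) (p ` I \<union> {p a, p b})
      = grass_sgn (p ` I) {p a, p b} * Q (p ` I) * (2 * grass_sgn {p a} {p b})"
    using disj by (intro gmul_grass_monom_Un) (simp_all add: I_def)
  moreover have "Q (p ` I) = x {} * 2 ^ r * (-1) ^ card (inversions p I)"
    unfolding Q_def I_def by (rule Suc.IH) (use inj in \<open>auto simp: I_def intro: inj_on_subset\<close>)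
  moreover have "(-1) ^ card (inversions p I) * (grass_sgn (p ` I) {p a, p b} * grass_sgn {p a} {p b})
      = ((-1) ^ card (inversions p (I \<union> {a, b})) :: 'k)"
    using inj by (intro grass_sgn_append_pair) (auto simp: I_def a_def b_def)
  ultimately show ?case
    unfolding I_Suc by (simp add: ac_simps)
qed

section \<open>Upper triangular matrices over \<open>E\<close>\<close>

abbreviation upper_left :: "'k utm \<Rightarrow> 'k grass" where "upper_left X \<equiv> fst X"
abbreviation upper_right :: "'k utm \<Rightarrow> 'k grass" where "upper_right X \<equiv> fst (snd X)"
abbreviation lower_right :: "'k utm \<Rightarrow> 'k grass" where "lower_right X \<equiv> snd (snd X)"

lemma acomm_components:
  "upper_left (acomm X Y) = gmul (upper_left X) (upper_left Y) - gmul (upper_left Y) (upper_left X)"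
  "upper_right (acomm X Y) =
     gmul (upper_left X) (upper_right Y) + gmul (upper_right X) (lower_right Y)
       - (gmul (upper_left Y) (upper_right X) + gmul (upper_right Y) (lower_right X))"
  "lower_right (acomm X Y) = gmul (lower_right X) (lower_right Y) - gmul (lower_right Y) (lower_right X)"
  by (cases X; cases Y; simp add: acomm_def)+

lemma upper_right_asmul: "upper_right (asmul c X) U = c * upper_right X U"
  by (cases X) simp

lemma upper_right_foldl_amul:
  assumes "upper_left X = 0" "\<forall>C \<in> set Cs. upper_left C = 0"
  shows "upper_left (foldl amul X Cs) = 0 \<and>
         upper_right (foldl amul X Cs) = foldl gmul (upper_right X) (map lower_right Cs)"
  using assms(2)
proof (induction Cs rule: rev_induct)
  case Nil
  show ?case using assms(1) by simp
next
  case (snoc C Cs)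
  \<comment> \<open>the induction method eta-expands the zero function, hence \<open>zero_fun_def\<close>\<close>
  obtain b c where "foldl amul X Cs = (0, b, c)"
    using snoc by (cases "foldl amul X Cs") (auto simp: zero_fun_def)
  moreover obtain b' c' where "C = (0, b', c')"
    using snoc.prems by (cases C) (auto simp: zero_fun_def)
  ultimately show ?case
    using snoc by simp
qed

lemma acomm_gone_diagonal:
  assumes "upper_left X = 0" "c {} = 0"
  shows "upper_left (acomm X (gone, 0, c)) = 0"
    and "upper_right (acomm X (gone, 0, c)) {} = - upper_right X {}"
  using assms by (simp_all add: acomm_components gmul_empty gone_def)

lemma iterated_acomm_upper_right_empty:
  assumes "upper_left X = 0" "c {} = 0"
  shows "upper_left (foldl acomm X (replicate k (gone, 0, c))) = 0 \<and>
         upper_right (foldl acomm X (replicate k (gone, 0, c))) {} = (-1) ^ k * upper_right X {}"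
proof (induction k)
  case 0
  show ?case using assms(1) by simp
next
  case (Suc k)
  then show ?case
    using acomm_gone_diagonal[of _ c, OF _ assms(2)]
    by (simp add: replicate_append_same[symmetric] zero_fun_def)
qed

section \<open>The substitution\<close>

lemma gmul_grass_monom_12_commute:
  assumes "1 \<le> k"
  shows "gmul (grass_monom {1, 2} 1) (grass_monom {k} 1) = gmul (grass_monom {k} 1) (grass_monom {1, 2} (1::'k::ring_1))"
proof (cases "k \<in> {1, 2}")
  case False
  with assms have "3 \<le> k" by auto
  then have no_inv: "{(s, t). s \<in> {1, 2::nat} \<and> t \<in> {k} \<and> t < s} = {}"
    and two_inv: "{(s, t). s \<in> {k} \<and> t \<in> {1, 2::nat} \<and> t < s} = {(k, 1), (k, 2)}"
    by auto
  have "grass_sgn {1, 2} {k} = (1::'k)" "grass_sgn {k} {1, 2} = (1::'k)"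
    using \<open>3 \<le> k\<close> unfolding grass_sgn_def no_inv two_inv by simp_all
  with False show ?thesis
    by (simp add: gmul_grass_monom_monom insert_commute)
qed (auto simp: gmul_grass_monom_monom)

definition gen_value :: "nat \<Rightarrow> 'k::ring_1 utm" where
  "gen_value j = (if j = 1 then gone else 0, if j = 2 then gone else 0, grass_monom {j} 1)"

definition test_poly :: "nat \<Rightarrow> nat \<Rightarrow> 'k ncpoly" where
  "test_poly n i =
     (if i = n + 1 then PMul (PVar 1) (PVar 1) else if i = n + 2 then PMul (PVar 1) (PVar 2) else PVar i)"

definition test_value :: "nat \<Rightarrow> nat \<Rightarrow> 'k::ring_1 utm" where
  "test_value n i = peval gen_value (test_poly n i)"

lemma gen_value_in_algA: "gen_value j \<in> algA"
  using gone_in_grassmann_even zero_in_grassmann_even grass_monom_in_grassmann[of "{j}"]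
  by (auto simp: algA_def gen_value_def grassmann_even_def)

lemma pvars_test_poly: "2 \<le> n \<Longrightarrow> i \<in> {1..n+2} \<Longrightarrow> pvars (test_poly n i) \<subseteq> {1..n}"
  by (auto simp: test_poly_def)

context
  fixes n :: nat
  assumes n_ge_2: "2 \<le> n"
begin

lemma test_value_low: "i \<in> {1..n} \<Longrightarrow> test_value n i = gen_value i"
  by (simp add: test_value_def test_poly_def)

lemma test_value_Suc: "test_value n (Suc n) = (gone, 0, 0)"
  using n_ge_2 by (simp add: test_value_def test_poly_def gen_value_def gmul_grass_monom_monom)

lemma test_value_Suc_Suc: "test_value n (Suc (Suc n)) = (0, gone, grass_monom {1, 2} 1)"
  using n_ge_2
  by (simp add: test_value_def test_poly_def gen_value_def gmul_grass_monom_monom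
      grass_sgn_singletons insert_commute)

lemma upper_left_test_value: "i \<in> {1..n+2} \<Longrightarrow> upper_left (test_value n i) \<in> {0, gone}"
  by (cases "i \<le> n") (auto simp: test_value_low gen_value_def le_Suc_eq test_value_Suc test_value_Suc_Suc)

lemma lower_right_test_value:
  "i \<in> {1..n+2} \<Longrightarrow> lower_right (test_value n i) =
     (if i \<le> n then grass_monom {i} 1 else if i = Suc n then 0 else grass_monom {1, 2} 1)"
  by (cases "i \<le> n") (auto simp: test_value_low gen_value_def le_Suc_eq test_value_Suc test_value_Suc_Suc)

lemma upper_left_acomm_test_value:
  assumes "i \<in> {1..n+2}" "j \<in> {1..n+2}"
  shows "upper_left (acomm (test_value n i) (test_value n j) :: 'k::ring_1 utm) = 0"
proof -
  have "upper_left (test_value n i :: 'k utm) \<in> {0, gone}" "upper_left (test_value n j :: 'k utm) \<in> {0, gone}"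
    by (rule upper_left_test_value[OF assms(1)], rule upper_left_test_value[OF assms(2)])
  then show ?thesis
    by (auto simp: acomm_components)
qed

lemma lower_right_acomm_test_value_low:
  assumes "i \<in> {1..n}" "j \<in> {1..n}" "i \<noteq> j"
  shows "lower_right (acomm (test_value n i) (test_value n j)) = grass_monom {i, j} (2 * grass_sgn {i} {j})"
  using assms
  by (simp add: acomm_components test_value_low gen_value_def gmul_grass_monom_monom
      grass_monom_diff grass_sgn_singletons insert_commute)

lemma lower_right_acomm_test_value_high:
  assumes "i \<in> {1..n+2}" "j \<in> {1..n+2}" "n < i \<or> n < j"
  shows "lower_right (acomm (test_value n i) (test_value n j) :: 'k::ring_1 utm) = 0"
proof -
  have "gmul (lower_right (test_value n i :: 'k utm)) (lower_right (test_value n j))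
          = gmul (lower_right (test_value n j)) (lower_right (test_value n i))"
    using assms gmul_grass_monom_12_commute[of i, where 'k = 'k] gmul_grass_monom_12_commute[of j, where 'k = 'k]
    by (auto simp: lower_right_test_value)
  then show ?thesis
    by (simp add: acomm_components)
qed

lemma upper_right_acomm_test_value_high:
  assumes "{i, j} = {Suc n, Suc (Suc n)}"
  shows "upper_right (acomm (test_value n i) (test_value n j)) {} = (if j < i then -1 else 1)"
  using assms
  by (auto simp: doubleton_eq_iff acomm_components test_value_Suc test_value_Suc_Suc gone_def)

end

section \<open>Evaluating the summands of \<open>f5\<close>\<close>

lemma sum_fun_apply: "(sum f A) x = (\<Sum>a\<in>A. f a x)"
  by (induction A rule: infinite_finite_induct) auto

definition f5_term :: "nat \<Rightarrow> nat \<Rightarrow> (nat \<Rightarrow> 'k::ring_1 utm) \<Rightarrow> (nat \<Rightarrow> nat) \<Rightarrow> 'k utm" where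
  "f5_term m n y \<sigma> =
     foldl amul
       (foldl acomm (acomm (y (\<sigma> 1)) (y (\<sigma> 2))) (replicate (m - n - 2) (y 1)))
       (map (\<lambda>i. acomm (y (\<sigma> (2*i+1))) (y (\<sigma> (2*i+2)))) [1..<n div 2 + 1])"

lemma f5_eq_sum_f5_term:
  "f5 m n y = (\<Sum>\<sigma> | \<sigma> permutes {1..n+2}. asmul (of_int (sign \<sigma>)) (f5_term m n y \<sigma>))"
  by (simp add: f5_def f5_term_def)

lemma permutes_image_tail:
  fixes n :: nat
  assumes "\<sigma> permutes {1..n+2}" "\<sigma> ` {1, 2} = {n + 1, n + 2}"
  shows "\<sigma> ` {3..<n+3} = {1..n}"
proof -
  have "{3..<n+3} = {1..n+2} - {1, 2}"
    by fastforce
  then have "\<sigma> ` {3..<n+3} = \<sigma> ` {1..n+2} - \<sigma> ` {1, 2}"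
    using permutes_inj[OF assms(1)] by (simp add: image_set_diff)
  also have "\<dots> = {1..n+2} - {n + 1, n + 2}"
    using assms by (simp only: permutes_image)
  also have "\<dots> = {1..n}"
    by fastforce
  finally show ?thesis .
qed

lemma permutes_high_value_in_tail:
  fixes n :: nat
  assumes "\<sigma> permutes {1..n+2}" "\<sigma> ` {1, 2} \<noteq> {n + 1, n + 2}"
  shows "\<exists>j \<in> {3..<n+3}. n < \<sigma> j"
proof (rule ccontr)
  assume low: "\<not> ?thesis"
  have "{1..n+2} = {1, 2} \<union> {3..<n+3}"
    by auto
  then have "{n + 1, n + 2} \<subseteq> \<sigma> ` {1, 2} \<union> \<sigma> ` {3..<n+3}"
    using permutes_image[OF assms(1)] by auto
  moreover have "k \<notin> \<sigma> ` {3..<n+3}" if "n < k" for k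
    using low that by auto
  ultimately have "{n + 1, n + 2} \<subseteq> \<sigma> ` {1, 2}"
    by auto
  moreover have "card (\<sigma> ` {1, 2}) \<le> card {n + 1, n + 2}"
    using card_image_le[of "{1, 2::nat}" \<sigma>] by simp
  ultimately have "{n + 1, n + 2} = \<sigma> ` {1, 2}"
    by (intro card_seteq) auto
  with assms(2) show False
    by simp
qed

lemma sign_extra_first:
  fixes n :: nat
  assumes "\<sigma> permutes {1..n+2}" "\<sigma> ` {1, 2} = {n + 1, n + 2}"
  shows "sign \<sigma> = (-1) ^ (card (inversions \<sigma> {1, 2}) + card (inversions \<sigma> {3..<n+3}))"
proof -
  have "\<sigma> j < \<sigma> i" if "i \<in> {1, 2}" "j \<in> {3..<n+3}" for i j
  proof -
    have "\<sigma> j \<in> {1..n}" using that(2) permutes_image_tail[OF assms] by blast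
    moreover have "\<sigma> i \<in> {n + 1, n + 2}" using that(1) assms(2) by blast
    ultimately show ?thesis by auto
  qed
  then have "{(i, j). i \<in> {1, 2} \<and> j \<in> {3..<n+3} \<and> \<sigma> j < \<sigma> i} = {1, 2} \<times> {3..<n+3}"
    by blast
  moreover have "card (inversions \<sigma> ({1, 2} \<union> {3..<n+3}))
      = card (inversions \<sigma> {1, 2}) + card (inversions \<sigma> {3..<n+3})
        + card {(i, j). i \<in> {1, 2} \<and> j \<in> {3..<n+3} \<and> \<sigma> j < \<sigma> i}"
    by (rule card_inversions_Un) auto
  moreover have "{1, 2} \<union> {3..<n+3} = {1..n+2}"
    by fastforce
  ultimately have "card (inversions \<sigma> {1..n+2})
               = card (inversions \<sigma> {1, 2}) + card (inversions \<sigma> {3..<n+3}) + 2 * n"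
    by (simp add: card_cartesian_product)
  then show ?thesis
    using sign_eq_card_inversions[OF assms(1)] by (simp add: power_add power_mult)
qed

context
  fixes n :: nat
  assumes n_ge_2: "2 \<le> n" and n_even: "even n"
begin

lemma pair_positions: "i \<in> set [1..<n div 2 + 1] \<Longrightarrow> 2*i+1 \<in> {3..<n+3} \<and> 2*i+2 \<in> {3..<n+3}"
  using n_even by (auto elim!: evenE)

lemma pair_position_exists:
  assumes "j \<in> {3..<n+3}"
  shows "\<exists>i \<in> set [1..<n div 2 + 1]. j = 2*i+1 \<or> j = 2*i+2"
proof
  obtain k where k: "n = 2 * k" using n_even by (rule evenE)
  show "(j - 1) div 2 \<in> set [1..<n div 2 + 1]"
    using assms unfolding k by auto
  show "j = 2 * ((j - 1) div 2) + 1 \<or> j = 2 * ((j - 1) div 2) + 2"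
  proof -
    have "1 \<le> j" using assms by simp
    then show ?thesis by presburger
  qed
qed

lemma upper_right_f5_term_test_value:
  fixes m :: nat and \<sigma> :: "nat \<Rightarrow> nat"
  assumes "\<sigma> permutes {1..n+2}"
  defines "L \<equiv> foldl acomm (acomm (test_value n (\<sigma> 1)) (test_value n (\<sigma> 2))) (replicate (m - n - 2) (test_value n 1)) :: 'k::ring_1 utm"
  shows "upper_right (f5_term m n (test_value n) \<sigma> :: 'k::ring_1 utm) =
           foldl gmul (upper_right L)
             (map (\<lambda>i. lower_right (acomm (test_value n (\<sigma> (2*i+1))) (test_value n (\<sigma> (2*i+2))))) [1..<n div 2 + 1])"
    and "upper_right L {} = (-1) ^ (m - n - 2) * upper_right (acomm (test_value n (\<sigma> 1)) (test_value n (\<sigma> 2)) :: 'k utm) {}"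
proof -
  have in_range: "\<sigma> j \<in> {1..n+2}" if "j \<in> {1..n+2}" for j
    using that permutes_in_image[OF assms(1)] by simp
  have "test_value n 1 = ((gone, 0, grass_monom {1} 1) :: 'k utm)"
    using n_ge_2 by (simp add: test_value_low gen_value_def)
  moreover have "upper_left (acomm (test_value n (\<sigma> 1)) (test_value n (\<sigma> 2)) :: 'k utm) = 0"
    using n_ge_2 by (intro upper_left_acomm_test_value in_range) auto
  ultimately have L: "upper_left (L :: 'k utm) = 0 \<and>
      upper_right L {} = (-1) ^ (m - n - 2) * upper_right (acomm (test_value n (\<sigma> 1)) (test_value n (\<sigma> 2)) :: 'k utm) {}"
    unfolding L_def by (simp add: iterated_acomm_upper_right_empty grass_monom_def)
  then show "upper_right L {} = (-1) ^ (m - n - 2) * upper_right (acomm (test_value n (\<sigma> 1)) (test_value n (\<sigma> 2)) :: 'k utm) {}"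
    by simp
  have "upper_left (acomm (test_value n (\<sigma> (2*i+1))) (test_value n (\<sigma> (2*i+2))) :: 'k utm) = 0"
    if "i \<in> set [1..<n div 2 + 1]" for i
    using pair_positions[OF that] by (intro upper_left_acomm_test_value in_range) auto
  then show "upper_right (f5_term m n (test_value n) \<sigma> :: 'k utm) = foldl gmul (upper_right L)
      (map (\<lambda>i. lower_right (acomm (test_value n (\<sigma> (2*i+1))) (test_value n (\<sigma> (2*i+2))))) [1..<n div 2 + 1])"
    using upper_right_foldl_amul[OF conjunct1[OF L]] unfolding f5_term_def L_def by (simp add: comp_def)
qed

lemma upper_right_f5_term_extra_not_first:
  assumes "\<sigma> permutes {1..n+2}" "\<sigma> ` {1, 2} \<noteq> {n + 1, n + 2}"
  shows "upper_right (f5_term m n (test_value n) \<sigma> :: 'k::ring_1 utm) {1..n} = 0"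
proof -
  obtain j where j: "j \<in> {3..<n+3}" "n < \<sigma> j"
    using permutes_high_value_in_tail[OF assms] by blast
  obtain i where i: "i \<in> set [1..<n div 2 + 1]" "j = 2*i+1 \<or> j = 2*i+2"
    using pair_position_exists[OF j(1)] by blast
  have "\<sigma> (2*i+1) \<in> {1..n+2}" "\<sigma> (2*i+2) \<in> {1..n+2}"
    using pair_positions[OF i(1)] permutes_in_image[OF assms(1)] by auto
  then have "lower_right (acomm (test_value n (\<sigma> (2*i+1))) (test_value n (\<sigma> (2*i+2))) :: 'k utm) = 0"
    using n_ge_2 i(2) j(2) by (intro lower_right_acomm_test_value_high) auto
  then have "0 \<in> set (map (\<lambda>i. lower_right (acomm (test_value n (\<sigma> (2*i+1))) (test_value n (\<sigma> (2*i+2))) :: 'k utm))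
                  [1..<n div 2 + 1])"
    using i(1) by force
  then show ?thesis
    by (simp only: upper_right_f5_term_test_value(1)[OF assms(1)] foldl_gmul_zero_mem zero_fun_apply)
qed

lemma upper_right_f5_term_extra_first:
  assumes "\<sigma> permutes {1..n+2}" "\<sigma> ` {1, 2} = {n + 1, n + 2}"
  shows "upper_right (f5_term m n (test_value n) \<sigma> :: 'k::comm_ring_1 utm) {1..n}
           = (-1) ^ (m - n - 2) * (-1) ^ card (inversions \<sigma> {1, 2})
             * 2 ^ (n div 2) * (-1) ^ card (inversions \<sigma> {3..<n+3})"
proof -
  define r where "r = n div 2"
  define L :: "'k utm" where
    "L = foldl acomm (acomm (test_value n (\<sigma> 1)) (test_value n (\<sigma> 2))) (replicate (m - n - 2) (test_value n 1))"
  have tail: "{3..<2 * r + 3} = {3..<n+3}"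
    using n_even by (simp add: r_def)
  have low: "\<sigma> j \<in> {1..n}" if "j \<in> {3..<n+3}" for j
    using that permutes_image_tail[OF assms] by blast
  have inj: "inj_on \<sigma> {3..<2 * r + 3}"
    using permutes_inj_on[OF assms(1)] by (rule inj_on_subset) (auto simp: tail)
  have "lower_right (acomm (test_value n (\<sigma> (2*i+1))) (test_value n (\<sigma> (2*i+2))) :: 'k utm)
          = grass_monom {\<sigma> (2*i+1), \<sigma> (2*i+2)} (2 * grass_sgn {\<sigma> (2*i+1)} {\<sigma> (2*i+2)})"
    if "i \<in> set [1..<n div 2 + 1]" for i
    using n_ge_2 pair_positions[OF that] low permutes_inj[OF assms(1)]
    by (intro lower_right_acomm_test_value_low) (auto dest: injD)
  then have "map (\<lambda>i. lower_right (acomm (test_value n (\<sigma> (2*i+1))) (test_value n (\<sigma> (2*i+2))) :: 'k utm))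
               [1..<n div 2 + 1]
      = map (\<lambda>i. grass_monom {\<sigma> (2*i+1), \<sigma> (2*i+2)} (2 * grass_sgn {\<sigma> (2*i+1)} {\<sigma> (2*i+2)})) [1..<r + 1]"
    unfolding r_def by (rule map_cong[OF refl])
  then have "upper_right (f5_term m n (test_value n) \<sigma>) = foldl gmul (upper_right L)
      (map (\<lambda>i. grass_monom {\<sigma> (2*i+1), \<sigma> (2*i+2)} (2 * grass_sgn {\<sigma> (2*i+1)} {\<sigma> (2*i+2)})) [1..<r + 1])"
    unfolding upper_right_f5_term_test_value(1)[OF assms(1)] L_def by (simp only:)
  also have "{1..n} = \<sigma> ` {3..<2 * r + 3}"
    using permutes_image_tail[OF assms] by (simp add: tail)
  ultimately have "upper_right (f5_term m n (test_value n) \<sigma>) {1..n}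
      = upper_right L {} * 2 ^ r * (-1) ^ card (inversions \<sigma> {3..<n+3})"
    using foldl_gmul_pair_monoms[OF inj, where x = "upper_right L"] by (simp add: tail)
  also have "upper_right L {} = (-1) ^ (m - n - 2) * (-1) ^ card (inversions \<sigma> {1, 2})"
  proof -
    have "{\<sigma> 1, \<sigma> 2} = {Suc n, Suc (Suc n)}"
      using assms(2) by simp
    then show ?thesis
      unfolding L_def upper_right_f5_term_test_value(2)[OF assms(1)]
      using n_ge_2 by (simp add: upper_right_acomm_test_value_high card_inversions_pair)
  qed
  finally show ?thesis
    by (simp add: r_def)
qed

lemma signed_coefficient_f5_term:
  assumes "\<sigma> permutes {1..n+2}"
  shows "of_int (sign \<sigma>) * upper_right (f5_term m n (test_value n) \<sigma> :: 'k::comm_ring_1 utm) {1..n}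
           = (if \<sigma> ` {1, 2} = {n + 1, n + 2} then (-1) ^ (m - n - 2) * 2 ^ (n div 2) else 0)"
proof (cases "\<sigma> ` {1, 2} = {n + 1, n + 2}")
  case True
  then show ?thesis
    unfolding sign_extra_first[OF assms True] upper_right_f5_term_extra_first[OF assms True]
    by (simp add: power_add algebra_simps power_mult_distrib[symmetric])
next
  case False
  then show ?thesis
    unfolding upper_right_f5_term_extra_not_first[OF assms False] by simp
qed

end

lemma exists_permutation_extra_first:
  fixes n :: nat
  assumes "2 \<le> n"
  shows "{\<sigma>. \<sigma> permutes {1..n+2} \<and> \<sigma> ` {1, 2} = {n + 1, n + 2}} \<noteq> {}"
proof -
  let ?\<sigma> = "transpose 1 (n + 1) \<circ> transpose 2 (n + 2)"
  have "?\<sigma> permutes {1..n+2}"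
    using assms by (intro permutes_compose permutes_swap_id) auto
  moreover have "?\<sigma> ` {1, 2} = {n + 1, n + 2}"
    using assms by auto
  ultimately show ?thesis
    by blast
qed

lemma upper_right_f5_test_value:
  fixes n :: nat
  assumes "2 \<le> n" "even n"
  shows "upper_right (f5 m n (test_value n) :: 'k::comm_ring_1 utm) {1..n}
           = of_nat (card {\<sigma>. \<sigma> permutes {1..n+2} \<and> \<sigma> ` {1, 2} = {n + 1, n + 2}})
             * (-1) ^ (m - n - 2) * 2 ^ (n div 2)"
proof -
  let ?P = "{\<sigma>. \<sigma> permutes {1..n+2}}"
  have "upper_right (f5 m n (test_value n) :: 'k utm) {1..n}
          = (\<Sum>\<sigma>\<in>?P. of_int (sign \<sigma>) * upper_right (f5_term m n (test_value n) \<sigma> :: 'k utm) {1..n})"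
    by (simp add: f5_eq_sum_f5_term fst_sum snd_sum sum_fun_apply upper_right_asmul)
  also have "\<dots> = (\<Sum>\<sigma>\<in>?P. if \<sigma> ` {1, 2} = {n + 1, n + 2} then (-1) ^ (m - n - 2) * 2 ^ (n div 2) else 0)"
    using assms by (intro sum.cong refl signed_coefficient_f5_term) auto
  also have "\<dots> = of_nat (card {\<sigma> \<in> ?P. \<sigma> ` {1, 2} = {n + 1, n + 2}}) * (-1) ^ (m - n - 2) * 2 ^ (n div 2)"
    by (simp add: sum.inter_filter[symmetric] finite_permutations mult.assoc)
  finally show ?thesis
    by simp
qed

theorem lemma3p9:
  fixes n m :: nat
  assumes "n \<ge> 2" and "even n" and "m \<ge> n + 2"
  shows "\<exists>g :: nat \<Rightarrow> 'k::field_char_0 ncpoly.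
           (\<forall>i \<in> {1..n+2}. pvars (g i) \<subseteq> {1..n}) \<and>
           (\<exists>a. (\<forall>j \<in> {1..n}. a j \<in> algA) \<and> f5 m n (\<lambda>i. peval a (g i)) \<noteq> 0)"
proof -
  have "finite {\<sigma>. \<sigma> permutes {1..n+2} \<and> \<sigma> ` {1, 2} = {n + 1, n + 2}}"
    by (rule finite_subset[OF _ finite_permutations[of "{1..n+2}"]]) auto
  then have "card {\<sigma>. \<sigma> permutes {1..n+2} \<and> \<sigma> ` {1, 2} = {n + 1, n + 2}} \<noteq> 0"
    using exists_permutation_extra_first[OF assms(1)] by simp
  then have "upper_right (f5 m n (test_value n) :: 'k utm) {1..n} \<noteq> 0"
    unfolding upper_right_f5_test_value[OF assms(1,2)] by simp
  then have "f5 m n (\<lambda>i. peval gen_value (test_poly n i)) \<noteq> (0 :: 'k utm)"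
    by (auto simp: test_value_def[abs_def])
  then show ?thesis
    using pvars_test_poly[OF assms(1)] gen_value_in_algA by blast
qed

end
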